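(* Let $G$ be a ride sharing game (as in the context), let $\vec a$ be a strategy profile and let $i,j$ be players. Suppose (H1) all players have a common set of strategies $\mathcal{A}_0$; (H2) $N\le w$; (H3) the seat allocation is first-fit; (H4) the strategy update $(\vec a,a_j,i)$ is no-vehicle-loss. Then $c_i(a_j,\vec a_{-i})\le c_j(\vec a)$.
   Context: A ride sharing game consists of players $\mathcal{N}=\{1,\ldots,N\}$; vehicles $\mathcal{M}=\{1,\ldots,M\}$ each with seating capacity $w\in\mathbb{N}_{>0}$; times $\mathcal{T}=\{1,\ldots,T\}$; a directed simple graph $\mathcal{G}=(\mathcal{V},\mathcal{E})$ where additionally every node has a loop. Strategies are paths $a_i=(v_1,e_1,\ldots,e_{T-1},v_T)$ in $\mathcal{G}$ from a set $\mathcal{A}_i$, edge $e_t$ traversed in period $(t,t+1)$; $\vec a$ is a profile and $(b_i,\vec a_{-i})$ the profile where $i$ switches to $b_i$; this switch is called the strategy update $(\vec a,b_i,i)$. An allocation map $\mu(i,t,\vec a)\in\mathcal{M}\cup\{\emptyset\}$ assigns players to vehicles; vehicles move with their players; $s_m(t,\vec a)$ is the number of players in vehicle $m$ during $(t,t+1)$ (taken to be $0$ for a player with no vehicle). $N_{et}(\vec a)$, $M_{et}(\vec a)$ are the numbers of players and vehicles on edge $e$ during $(t,t+1)$. Costs: $c_e(w,s)\ge0$ is monotone decreasing in $s$ for $s<w$ and monotone increasing for $s\ge w$; $c_i(\vec a)=\sum_{e_t\in a_i}c_e(w,s_{\mu(i,t,\vec a)}(t,\vec a))$. The allocation consists of a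 path allocation (which edges vehicles move on) and a seat allocation (assigning players on an edge to the vehicles there); the seat allocation is first-fit if players on an edge are put into the vehicle with smallest index there until it is full, then the next, etc. A strategy update $(\vec a,b_i,i)$ is no-vehicle-loss if $M_{et}(b_i,\vec a_{-i})\neq0$ for every $e_t\in b_i$ with $M_{et}(\vec a)>0$. *)

theory Defs
  imports Complex_Main
begin

text \<open>Players are 1..N, vehicles are 1..M, times are 1..T.  A strategy (path)
  is the list of visited vertices [v_1,...,v_T]; the edge e_t traversed during
  the period (t,t+1), t in 1..T-1, is (v_t, v_(t+1)).  Edges are pairs of
  vertices (directed simple graph given by an edge relation, with all loops).
  A profile assigns a path to every player; the path allocation 'vp a m' is the
  path of vehicle m under profile a; the allocation map 'mu i t a' gives the
  vehicle of player i in period (t,t+1) under profile a (None = no vehicle).\<close>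

type_synonym 'v profile = "nat \<Rightarrow> 'v list"

definition players :: "nat \<Rightarrow> nat set" where
  "players N = {1..N}"

definition vehicles :: "nat \<Rightarrow> nat set" where
  "vehicles M = {1..M}"

definition edge_at :: "'v list \<Rightarrow> nat \<Rightarrow> 'v \<times> 'v" where
  "edge_at p t = (p ! (t - 1), p ! t)"

definition is_path :: "'v set \<Rightarrow> ('v \<times> 'v) set \<Rightarrow> nat \<Rightarrow> 'v list \<Rightarrow> bool" where
  "is_path V E T p \<longleftrightarrow> length p = T \<and> set p \<subseteq> V \<and> (\<forall>t\<in>{1..<T}. edge_at p t \<in> E)"

definition feasible :: "nat \<Rightarrow> (nat \<Rightarrow> 'v list set) \<Rightarrow> 'v profile \<Rightarrow> bool" where
  "feasible N A a \<longleftrightarrow> (\<forall>i\<in>players N. a i \<in> A i)"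

definition num_players_on :: "nat \<Rightarrow> 'v profile \<Rightarrow> 'v \<times> 'v \<Rightarrow> nat \<Rightarrow> nat" where
  "num_players_on N a e t = card {k \<in> players N. edge_at (a k) t = e}"

definition num_vehicles_on ::
  "nat \<Rightarrow> ('v profile \<Rightarrow> nat \<Rightarrow> 'v list) \<Rightarrow> 'v profile \<Rightarrow> 'v \<times> 'v \<Rightarrow> nat \<Rightarrow> nat" where
  "num_vehicles_on M vp a e t = card {m \<in> vehicles M. edge_at (vp a m) t = e}"

definition load ::
  "nat \<Rightarrow> (nat \<Rightarrow> nat \<Rightarrow> 'v profile \<Rightarrow> nat option) \<Rightarrow> nat \<Rightarrow> nat \<Rightarrow> 'v profile \<Rightarrow> nat" where
  "load N mu m t a = card {k \<in> players N. mu k t a = Some m}"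

definition seat_load ::
  "nat \<Rightarrow> (nat \<Rightarrow> nat \<Rightarrow> 'v profile \<Rightarrow> nat option) \<Rightarrow> nat \<Rightarrow> nat \<Rightarrow> 'v profile \<Rightarrow> nat" where
  "seat_load N mu i t a = (case mu i t a of None \<Rightarrow> 0 | Some m \<Rightarrow> load N mu m t a)"

definition cost ::
  "nat \<Rightarrow> nat \<Rightarrow> nat \<Rightarrow> ('v \<times> 'v \<Rightarrow> nat \<Rightarrow> nat \<Rightarrow> real)
   \<Rightarrow> (nat \<Rightarrow> nat \<Rightarrow> 'v profile \<Rightarrow> nat option) \<Rightarrow> 'v profile \<Rightarrow> nat \<Rightarrow> real" where
  "cost N T w c mu a i = (\<Sum>t\<in>{1..<T}. c (edge_at (a i) t) w (seat_load N mu i t a))"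

definition ride_sharing_game ::
  "nat \<Rightarrow> nat \<Rightarrow> nat \<Rightarrow> nat \<Rightarrow> 'v set \<Rightarrow> ('v \<times> 'v) set \<Rightarrow> (nat \<Rightarrow> 'v list set)
   \<Rightarrow> ('v \<times> 'v \<Rightarrow> nat \<Rightarrow> nat \<Rightarrow> real) \<Rightarrow> ('v profile \<Rightarrow> nat \<Rightarrow> 'v list)
   \<Rightarrow> (nat \<Rightarrow> nat \<Rightarrow> 'v profile \<Rightarrow> nat option) \<Rightarrow> bool" where
  "ride_sharing_game N M w T V E A c vp mu \<longleftrightarrow>
     0 < w \<and>
     E \<subseteq> V \<times> V \<and> (\<forall>v\<in>V. (v, v) \<in> E) \<and>
     (\<forall>i\<in>players N. A i \<subseteq> {p. is_path V E T p}) \<and>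
     (\<forall>e\<in>E. \<forall>s. 0 \<le> c e w s) \<and>
     (\<forall>e\<in>E. \<forall>s. s < w \<longrightarrow> c e w (Suc s) \<le> c e w s) \<and>
     (\<forall>e\<in>E. \<forall>s. w \<le> s \<longrightarrow> c e w s \<le> c e w (Suc s)) \<and>
     (\<forall>a. feasible N A a \<longrightarrow>
        (\<forall>m\<in>vehicles M. is_path V E T (vp a m)) \<and>
        (\<forall>i\<in>players N. \<forall>t\<in>{1..<T}. \<forall>m. mu i t a = Some m \<longrightarrow>
            m \<in> vehicles M \<and> edge_at (vp a m) t = edge_at (a i) t) \<and>
        (\<forall>m\<in>vehicles M. \<forall>t\<in>{1..<T}. load N mu m t a \<le> w))"

text \<open>First-fit seat allocation: for every profile, period and edge, the players
  on that edge (in some order P) are put, w at a time, into the vehicles on that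
  edge in increasing index order; players beyond the total capacity get no vehicle.\<close>
definition first_fit ::
  "nat \<Rightarrow> nat \<Rightarrow> nat \<Rightarrow> nat \<Rightarrow> (nat \<Rightarrow> 'v list set) \<Rightarrow> ('v profile \<Rightarrow> nat \<Rightarrow> 'v list)
   \<Rightarrow> (nat \<Rightarrow> nat \<Rightarrow> 'v profile \<Rightarrow> nat option) \<Rightarrow> bool" where
  "first_fit N M w T A vp mu \<longleftrightarrow>
     (\<forall>a. feasible N A a \<longrightarrow> (\<forall>t\<in>{1..<T}. \<forall>e.
        \<exists>P. distinct P \<and> set P = {k \<in> players N. edge_at (a k) t = e} \<and>
          (let Vs = sorted_list_of_set {m \<in> vehicles M. edge_at (vp a m) t = e} in
           \<forall>k<length P. mu (P ! k) t a =
              (if k div w < length Vs then Some (Vs ! (k div w)) else None))))"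

definition no_vehicle_loss ::
  "nat \<Rightarrow> nat \<Rightarrow> ('v profile \<Rightarrow> nat \<Rightarrow> 'v list) \<Rightarrow> 'v profile \<Rightarrow> 'v list \<Rightarrow> nat \<Rightarrow> bool" where
  "no_vehicle_loss M T vp a b i \<longleftrightarrow>
     (\<forall>t\<in>{1..<T}. num_vehicles_on M vp a (edge_at b t) t > 0 \<longrightarrow>
        num_vehicles_on M vp (a(i := b)) (edge_at b t) t \<noteq> 0)"

end

theory Submission
  imports Defs
begin

text \<open>With at most w players in the whole game, first-fit never gets past the first
  vehicle on an edge: every player on an edge rides in its least-indexed vehicle, so the
  seat load of a player is the number of players on its edge, or 0 if no vehicle is
  there.  Switching player i to the strategy of j only adds players to the edges of
  a_j, and no-vehicle-loss keeps a vehicle on each of them that had one; as the edge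
  costs decrease below the capacity w, every term of c_i(a_j, a_{-i}) is at most the
  corresponding term of c_j(a).\<close>

definition vehicles_on ::
  "nat \<Rightarrow> ('v profile \<Rightarrow> nat \<Rightarrow> 'v list) \<Rightarrow> 'v profile \<Rightarrow> 'v \<times> 'v \<Rightarrow> nat \<Rightarrow> nat set" where
  "vehicles_on M vp a e t = {m \<in> vehicles M. edge_at (vp a m) t = e}"

lemma finite_vehicles_on: "finite (vehicles_on M vp a e t)"
  by (simp add: vehicles_on_def vehicles_def)

lemma num_vehicles_on_eq_0_iff:
  "num_vehicles_on M vp a e t = 0 \<longleftrightarrow> vehicles_on M vp a e t = {}"
  using finite_vehicles_on[of M vp a e t]
  by (simp add: num_vehicles_on_def vehicles_on_def[symmetric])

lemma num_players_on_le: "num_players_on N a e t \<le> N"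
proof -
  have "num_players_on N a e t \<le> card (players N)"
    unfolding num_players_on_def by (rule card_mono) (auto simp: players_def)
  then show ?thesis by (simp add: players_def)
qed

lemma num_players_on_update_mono:
  assumes "edge_at p t = e"
  shows "num_players_on N a e t \<le> num_players_on N (a(i := p)) e t"
  unfolding num_players_on_def
  by (rule card_mono) (use assms in \<open>auto simp: players_def\<close>)

lemma feasible_update:
  assumes "feasible N A a" and "p \<in> A i"
  shows "feasible N A (a(i := p))"
  using assms by (simp add: feasible_def)

lemma first_fit_allocation:
  assumes ff: "first_fit N M w T A vp mu" and N_le_w: "N \<le> w"
    and x: "feasible N A x" and t: "t \<in> {1..<T}" and k: "k \<in> players N"
  defines "S \<equiv> vehicles_on M vp x (edge_at (x k) t) t"
  shows "mu k t x = (if S = {} then None else Some (Min S))"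
proof -
  obtain P where P: "distinct P" "set P = {k' \<in> players N. edge_at (x k') t = edge_at (x k) t}"
    and mu_P: "\<forall>n<length P. mu (P ! n) t x =
        (if n div w < length (sorted_list_of_set S) then Some (sorted_list_of_set S ! (n div w))
         else None)"
    using ff x t unfolding first_fit_def Let_def S_def vehicles_on_def by blast
  have "k \<in> set P"
    using P(2) k by simp
  then obtain n where n: "n < length P" "P ! n = k"
    by (auto simp: in_set_conv_nth)
  have "length P = card (set P)"
    using P(1) by (simp add: distinct_card)
  also have "\<dots> \<le> card (players N)"
    using P(2) by (intro card_mono) (auto simp: players_def)
  finally have "length P \<le> N"
    by (simp add: players_def)
  then have "n div w = 0"
    using n N_le_w by simp
  then have mu_k: "mu k t x =
      (if 0 < length (sorted_list_of_set S) then Some (sorted_list_of_set S ! 0) else None)"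
    using mu_P[rule_format, OF n(1)] n(2) by simp
  show ?thesis
  proof (cases "S = {}")
    case False
    have "sorted_list_of_set S = Min S # sorted_list_of_set (S - {Min S})"
      using False by (intro sorted_list_of_set_nonempty) (simp_all add: S_def finite_vehicles_on)
    with False mu_k show ?thesis by simp
  qed (simp add: mu_k)
qed

lemma first_fit_seat_load:
  assumes ff: "first_fit N M w T A vp mu" and N_le_w: "N \<le> w"
    and x: "feasible N A x" and t: "t \<in> {1..<T}" and k: "k \<in> players N"
  shows "seat_load N mu k t x =
     (if num_vehicles_on M vp x (edge_at (x k) t) t = 0 then 0
      else num_players_on N x (edge_at (x k) t) t)"
proof -
  define e where "e = edge_at (x k) t"
  define S where "S = vehicles_on M vp x e t"
  have alloc: "\<And>k'. k' \<in> players N \<Longrightarrow> mu k' t x =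
      (if vehicles_on M vp x (edge_at (x k') t) t = {} then None
       else Some (Min (vehicles_on M vp x (edge_at (x k') t) t)))"
    using first_fit_allocation[OF ff N_le_w x t] by blast
  show ?thesis
  proof (cases "S = {}")
    case True
    then show ?thesis
      using alloc[OF k] by (simp add: seat_load_def num_vehicles_on_eq_0_iff S_def e_def)
  next
    case False
    have Min_S: "Min S \<in> S"
      using False finite_vehicles_on Min_in unfolding S_def by blast
    \<comment> \<open>a player in the first vehicle of any edge lies on the edge of that vehicle, i.e. on e\<close>
    have "{k' \<in> players N. mu k' t x = Some (Min S)} = {k' \<in> players N. edge_at (x k') t = e}"
    proof (intro set_eqI iffI)
      fix k' assume k': "k' \<in> {k' \<in> players N. mu k' t x = Some (Min S)}"
      define S' where "S' = vehicles_on M vp x (edge_at (x k') t) t"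
      have "S' \<noteq> {}" and "Min S = Min S'"
        using alloc[of k'] k' by (auto simp: S'_def split: if_splits)
      then have "Min S \<in> S'"
        using Min_in finite_vehicles_on unfolding S'_def by metis
      with k' Min_S show "k' \<in> {k' \<in> players N. edge_at (x k') t = e}"
        by (auto simp: vehicles_on_def S_def S'_def)
    qed (use alloc False in \<open>auto simp: S_def\<close>)
    then show ?thesis
      using alloc[OF k] False
      by (simp add: seat_load_def load_def num_players_on_def num_vehicles_on_eq_0_iff
          S_def e_def)
  qed
qed

lemma seat_load_update_ge:
  assumes ff: "first_fit N M w T A vp mu" and N_le_w: "N \<le> w"
    and a: "feasible N A a" and b: "feasible N A (a(i := a j))"
    and t: "t \<in> {1..<T}" and i: "i \<in> players N" and j: "j \<in> players N"
    and keeps_vehicle: "num_vehicles_on M vp a (edge_at (a j) t) t > 0 \<Longrightarrow>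
       num_vehicles_on M vp (a(i := a j)) (edge_at (a j) t) t \<noteq> 0"
  shows "seat_load N mu j t a \<le> seat_load N mu i t (a(i := a j))"
  using first_fit_seat_load[OF ff N_le_w a t j] first_fit_seat_load[OF ff N_le_w b t i]
    num_players_on_update_mono[of "a j" t _ N a i] keeps_vehicle
  by auto

theorem lemma2:
  fixes N M w T :: nat and V :: "'v set" and E :: "('v \<times> 'v) set"
    and A :: "nat \<Rightarrow> 'v list set" and A0 :: "'v list set"
    and c :: "'v \<times> 'v \<Rightarrow> nat \<Rightarrow> nat \<Rightarrow> real"
    and vp :: "'v profile \<Rightarrow> nat \<Rightarrow> 'v list"
    and mu :: "nat \<Rightarrow> nat \<Rightarrow> 'v profile \<Rightarrow> nat option"
    and a :: "'v profile" and i j :: nat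
  assumes game: "ride_sharing_game N M w T V E A c vp mu"
    and H1: "\<forall>k\<in>players N. A k = A0"
    and H2: "N \<le> w"
    and H3: "first_fit N M w T A vp mu"
    and a: "feasible N A a"
    and i: "i \<in> players N" and j: "j \<in> players N"
    and H4: "no_vehicle_loss M T vp a (a j) i"
  shows "cost N T w c mu (a(i := a j)) i \<le> cost N T w c mu a j"
  unfolding cost_def
proof (rule sum_mono)
  fix t assume t: "t \<in> {1..<T}"
  let ?b = "a(i := a j)"
  have aj_A: "a j \<in> A i"
    using a H1 i j by (simp add: feasible_def)
  have b: "feasible N A ?b"
    using feasible_update[OF a aj_A] .
  have "is_path V E T (a j)"
    using game aj_A i unfolding ride_sharing_game_def by blast
  then have edge_E: "edge_at (a j) t \<in> E"
    using t by (simp add: is_path_def)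
  have cost_antitone: "\<And>s. s < w \<Longrightarrow> c (edge_at (a j) t) w (Suc s) \<le> c (edge_at (a j) t) w s"
    using game edge_E by (simp add: ride_sharing_game_def)
  have le: "seat_load N mu j t a \<le> seat_load N mu i t ?b"
    using seat_load_update_ge[OF H3 H2 a b t i j] H4 t by (simp add: no_vehicle_loss_def)
  have le_w: "seat_load N mu i t ?b \<le> w"
    using first_fit_seat_load[OF H3 H2 b t i] by (simp add: le_trans[OF num_players_on_le H2])
  have "c (edge_at (a j) t) w (seat_load N mu i t ?b) \<le> c (edge_at (a j) t) w (seat_load N mu j t a)"
    by (rule lift_Suc_antimono_le_ivl[where N = "{..<w}", OF _ le]) (use cost_antitone le_w in auto)
  then show "c (edge_at (?b i) t) w (seat_load N mu i t ?b) \<le> c (edge_at (a j) t) w (seat_load N mu j t a)"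
    by simp
qed

end
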